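(* Let $\mathcal I$ be partial. For any policy $\pi$ with shielded policy $\pi'=\mathcal G(\pi)$, $$\bar V^\pi(d_0)\le\bar V^{\pi'}(d_0)+\frac1{1-\gamma}\mathbb E_{(s,a)\sim\tilde d^\pi}\big[\mathbb 1\{(s,a)\in\mathcal I\}\big].$$
   Context: $\mathcal M=(\mathcal S,\mathcal A,P,r,\gamma)$ is a discounted MDP with discrete state and action spaces, discount $\gamma\in[0,1)$, initial distribution $d_0$. $\mathcal S$ contains two distinguished states $s_\triangleright,s_\circ$; $\mathcal S_{\mathrm{safe}}=\mathcal S\setminus\{s_\triangleright,s_\circ\}$; from $s_\triangleright$ every action leads to $s_\circ$ w.p. 1, $s_\circ$ is absorbing, $d_0(s_\circ)=0$. Cost $c(s,a)=\mathbb 1\{s=s_\triangleright\}$; $\bar V^\pi(d_0)=\mathbb E[\sum_t\gamma^tc(s_t,a_t)]$ for trajectories of the stationary policy $\pi$ in $\mathcal M$ with $s_0\sim d_0$. An intervention rule $\mathcal G=(\bar Q,\mu,\eta)$ (backup policy $\mu$, $\eta\in[0,1]$, $\bar Q:\mathcal S_{\mathrm{safe}}\times\mathcal A\to[0,1]$) has intervention set $\mathcal I=\{(s,a)\in\mathcal S_{\mathrm{safe}}\times\mathcal A:\bar Q(s,a)-\mathbb E_{a'\sim\mu(\cdot|s)}\bar Q(s,a')>\eta\}$ and shielded policy $\mathcal G(\pi)(a|s)=\pi(a|s)\mathbb 1\{(s,a)\notin\mathcal I\}+w(s)\mu(a|s)$, $w(s)=\sum_{\tilde a:(s,\tilde a)\in\mathcal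 I}\pi(\tilde a|s)$. A set $\mathcal X\subseteq\mathcal S_{\mathrm{safe}}\times\mathcal A$ is partial if for every $(s,a)\in\mathcal X$ there is $a'$ with $(s,a')\notin\mathcal X$. The absorbing MDP $\tilde{\mathcal M}$ (for a constant $\tilde R\le0$) has state space $\mathcal S\cup\{s_\dagger\}$, reward $\tilde R$ on $\mathcal I$, $0$ at $s_\dagger$, $r$ otherwise, and from $(s,a)\in\mathcal I$ or from $s_\dagger$ moves to $s_\dagger$ w.p. 1, otherwise follows $P$; policies are extended to $s_\dagger$ arbitrarily; $\tilde d^\pi(s,a)=(1-\gamma)\sum_t\gamma^t\Pr(s_t=s,a_t=a)$ for trajectories of $\pi$ in $\tilde{\mathcal M}$ with $s_0\sim d_0$. *)

theory Defs
  imports "HOL-Probability.Probability"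
begin

text \<open>Discrete MDPs: states of type 's, actions of type 'a (the action space is the
whole type), transition kernel P :: 's => 'a => 's pmf, stationary policies
's => 'a pmf, initial distribution d0 :: 's pmf.\<close>

primrec state_dist :: "('s \<Rightarrow> 'a \<Rightarrow> 's pmf) \<Rightarrow> ('s \<Rightarrow> 'a pmf) \<Rightarrow> 's pmf \<Rightarrow> nat \<Rightarrow> 's pmf" where
  "state_dist K pol d0 0 = d0"
| "state_dist K pol d0 (Suc t) = bind_pmf (state_dist K pol d0 t) (\<lambda>s. bind_pmf (pol s) (\<lambda>a. K s a))"

definition sa_dist :: "('s \<Rightarrow> 'a \<Rightarrow> 's pmf) \<Rightarrow> ('s \<Rightarrow> 'a pmf) \<Rightarrow> 's pmf \<Rightarrow> nat \<Rightarrow> ('s \<times> 'a) pmf" where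
  "sa_dist K pol d0 t = bind_pmf (state_dist K pol d0 t) (\<lambda>s. map_pmf (\<lambda>a. (s, a)) (pol s))"

definition cost :: "'s \<Rightarrow> 's \<Rightarrow> 'a \<Rightarrow> real" where
  "cost s_tri s a = (if s = s_tri then 1 else 0)"

definition cost_value :: "real \<Rightarrow> 's \<Rightarrow> ('s \<Rightarrow> 'a \<Rightarrow> 's pmf) \<Rightarrow> ('s \<Rightarrow> 'a pmf) \<Rightarrow> 's pmf \<Rightarrow> real" where
  "cost_value \<gamma> s_tri P pol d0 =
     (\<Sum>t. \<gamma> ^ t * measure_pmf.expectation (sa_dist P pol d0 t) (\<lambda>(s, a). cost s_tri s a))"

definition interv_set :: "'s \<Rightarrow> 's \<Rightarrow> ('s \<Rightarrow> 'a \<Rightarrow> real) \<Rightarrow> ('s \<Rightarrow> 'a pmf) \<Rightarrow> real \<Rightarrow> ('s \<times> 'a) set" where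
  "interv_set s_tri s_circ Q mu \<eta> =
     {(s, a). s \<noteq> s_tri \<and> s \<noteq> s_circ \<and>
              Q s a - measure_pmf.expectation (mu s) (\<lambda>a'. Q s a') > \<eta>}"

definition partial_set :: "('s \<times> 'a) set \<Rightarrow> bool" where
  "partial_set X \<longleftrightarrow> (\<forall>(s, a) \<in> X. \<exists>a'. (s, a') \<notin> X)"

definition shielded :: "('s \<times> 'a) set \<Rightarrow> ('s \<Rightarrow> 'a pmf) \<Rightarrow> ('s \<Rightarrow> 'a pmf) \<Rightarrow> 's \<Rightarrow> 'a pmf" where
  "shielded I mu pol s = embed_pmf (\<lambda>a.
      pmf (pol s) a * (if (s, a) \<notin> I then 1 else 0)
      + measure_pmf.prob (pol s) {a'. (s, a') \<in> I} * pmf (mu s) a)"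

text \<open>Absorbing MDP: state space 's option, None = s_dagger.\<close>
definition absorb_kernel :: "('s \<times> 'a) set \<Rightarrow> ('s \<Rightarrow> 'a \<Rightarrow> 's pmf) \<Rightarrow> 's option \<Rightarrow> 'a \<Rightarrow> 's option pmf" where
  "absorb_kernel I P x a = (case x of
      None \<Rightarrow> return_pmf None
    | Some s \<Rightarrow> (if (s, a) \<in> I then return_pmf None else map_pmf Some (P s a)))"

definition ext_policy :: "('s \<Rightarrow> 'a pmf) \<Rightarrow> 'a pmf \<Rightarrow> 's option \<Rightarrow> 'a pmf" where
  "ext_policy pol pi_dag x = (case x of None \<Rightarrow> pi_dag | Some s \<Rightarrow> pol s)"

definition absorb_occ :: "real \<Rightarrow> ('s \<times> 'a) set \<Rightarrow> ('s \<Rightarrow> 'a \<Rightarrow> 's pmf) \<Rightarrow> ('s \<Rightarrow> 'a pmf) \<Rightarrow> 'a pmf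
     \<Rightarrow> 's pmf \<Rightarrow> 's option \<times> 'a \<Rightarrow> real" where
  "absorb_occ \<gamma> I P pol pi_dag d0 x =
     (1 - \<gamma>) * (\<Sum>t. \<gamma> ^ t * pmf (sa_dist (absorb_kernel I P) (ext_policy pol pi_dag) (map_pmf Some d0) t) x)"

end

theory Submission
  imports Defs
begin

text \<open>Couple the trajectory of \<open>\<pi>\<close> with a flag that stays up until the first intervened
pair is played. While the flag is up, the coupled trajectory is a trajectory of the absorbing MDP,
and the state law of the absorbing MDP is dominated by that of \<open>\<G>(\<pi>)\<close>, because \<open>\<G>(\<pi>)\<close> only
adds mass to non-intervened actions. Hence \<open>\<pi>\<close> can exceed \<open>\<G>(\<pi>)\<close> in visits to \<open>s\<^sub>\<triangleright>\<close> only
on trajectories whose flag has dropped. A trajectory dropping its flag at time \<open>k\<close> has weight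
\<open>\<gamma>\<^sup>k\<close> in the discounted intervention mass, and afterwards it visits \<open>s\<^sub>\<triangleright>\<close> at most once,
since \<open>s\<^sub>\<triangleright>\<close> leads to the absorbing \<open>s\<^sub>\<circ>\<close>. Made quantitative, this is a telescoping bound
whose potential is the mass of dropped trajectories still in \<open>\<S>\<^sub>s\<^sub>a\<^sub>f\<^sub>e\<close>.\<close>

lemma state_dist_Suc_sa_dist:
  "state_dist K pol d0 (Suc t) = bind_pmf (sa_dist K pol d0 t) (\<lambda>(x, a). K x a)"
  by (simp add: sa_dist_def bind_assoc_pmf bind_map_pmf bind_return_pmf map_pmf_def)

lemma map_fst_sa_dist: "map_pmf fst (sa_dist K pol d0 t) = state_dist K pol d0 t"
  by (simp add: sa_dist_def map_bind_pmf pmf.map_comp o_def bind_return_pmf')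

lemma expectation_cost_sa_dist:
  "measure_pmf.expectation (sa_dist K pol d0 t) (\<lambda>(s, a). cost s_tri s a)
     = pmf (state_dist K pol d0 t) s_tri"
proof -
  have cost_indicator: "(\<lambda>(s, a). cost s_tri s a) = indicator (fst -` {s_tri})"
    by (auto simp: cost_def indicator_def fun_eq_iff)
  have "measure_pmf.expectation (sa_dist K pol d0 t) (\<lambda>(s, a). cost s_tri s a)
     = measure_pmf.prob (map_pmf fst (sa_dist K pol d0 t)) {s_tri}"
    unfolding cost_indicator by simp
  then show ?thesis
    by (simp add: map_fst_sa_dist measure_pmf_single)
qed

lemma summable_discounted:
  fixes f :: "nat \<Rightarrow> real"
  assumes "0 \<le> \<gamma>" "\<gamma> < 1" "\<And>t. 0 \<le> f t" "\<And>t. f t \<le> 1"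
  shows "summable (\<lambda>t. \<gamma> ^ t * f t)"
  by (rule summable_comparison_test[OF _ summable_geometric[of \<gamma>]])
     (use assms in \<open>auto intro!: exI[of _ 0] mult_left_le\<close>)

lemma cost_value_eq_suminf_pmf:
  "cost_value \<gamma> s_tri P pol d0 = (\<Sum>t. \<gamma> ^ t * pmf (state_dist P pol d0 t) s_tri)"
  by (simp add: cost_value_def expectation_cost_sa_dist)

lemma infsum_eq_of_nn_integral:
  fixes f :: "'x \<Rightarrow> real"
  assumes "\<And>x. 0 \<le> f x" "0 \<le> c" "(\<integral>\<^sup>+x. ennreal (f x) \<partial>count_space A) = ennreal c"
  shows "infsum f A = c"
proof -
  have "Infinite_Set_Sum.abs_summable_on f A"
    unfolding abs_summable_on_def by (rule integrableI_nonneg) (use assms in auto)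
  then have "infsum f A = infsetsum f A"
    by (rule infsetsum_infsum[symmetric])
  also have "\<dots> = c"
    by (subst infsetsum_conv_nn_integral) (use assms in auto)
  finally show ?thesis .
qed

lemma infsum_discounted_pmf:
  fixes S :: "nat \<Rightarrow> 'x pmf"
  assumes "0 \<le> \<gamma>" "\<gamma> < 1"
  shows "infsum (\<lambda>x. \<Sum>t. \<gamma> ^ t * pmf (S t) x) A = (\<Sum>t. \<gamma> ^ t * measure_pmf.prob (S t) A)"
proof (rule infsum_eq_of_nn_integral)
  have summable_pmf: "summable (\<lambda>t. \<gamma> ^ t * pmf (S t) x)" for x
    by (rule summable_discounted) (use assms in \<open>auto simp: pmf_le_1\<close>)
  have summable_prob: "summable (\<lambda>t. \<gamma> ^ t * measure_pmf.prob (S t) A)"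
    by (rule summable_discounted) (use assms in auto)
  show "0 \<le> (\<Sum>t. \<gamma> ^ t * pmf (S t) x)" for x
    by (rule suminf_nonneg[OF summable_pmf]) (use assms in auto)
  show "0 \<le> (\<Sum>t. \<gamma> ^ t * measure_pmf.prob (S t) A)"
    by (rule suminf_nonneg[OF summable_prob]) (use assms in auto)
  have "(\<integral>\<^sup>+x. ennreal (\<Sum>t. \<gamma> ^ t * pmf (S t) x) \<partial>count_space A)
      = (\<integral>\<^sup>+x. (\<Sum>t. ennreal (\<gamma> ^ t * pmf (S t) x)) \<partial>count_space A)"
    by (intro nn_integral_cong suminf_ennreal2[symmetric, OF _ summable_pmf]) (use assms in auto)
  also have "\<dots> = (\<Sum>t. ennreal (\<gamma> ^ t) * (\<integral>\<^sup>+x. ennreal (pmf (S t) x) \<partial>count_space A))"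
    using assms by (simp add: nn_integral_suminf ennreal_mult nn_integral_cmult)
  also have "\<dots> = (\<Sum>t. ennreal (\<gamma> ^ t * measure_pmf.prob (S t) A))"
    using assms by (simp add: nn_integral_pmf measure_pmf.emeasure_eq_measure ennreal_mult)
  also have "\<dots> = ennreal (\<Sum>t. \<gamma> ^ t * measure_pmf.prob (S t) A)"
    by (rule suminf_ennreal2[OF _ summable_prob]) (use assms in auto)
  finally show "(\<integral>\<^sup>+x. ennreal (\<Sum>t. \<gamma> ^ t * pmf (S t) x) \<partial>count_space A)
      = ennreal (\<Sum>t. \<gamma> ^ t * measure_pmf.prob (S t) A)" .
qed

lemma suminf_discounted_le_of_step:
  fixes a b p :: "nat \<Rightarrow> real"
  assumes gamma: "0 \<le> \<gamma>" "\<gamma> < 1"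
    and step: "\<And>t. a (Suc t) + b (Suc t) \<le> a t + p t" and "a 0 = 0" "b 0 = 0"
    and a: "\<And>t. 0 \<le> a t" and b: "\<And>t. 0 \<le> b t" "\<And>t. b t \<le> 1"
    and p: "\<And>t. 0 \<le> p t" "\<And>t. p t \<le> 1"
  shows "(\<Sum>t. \<gamma> ^ t * b t) \<le> (\<Sum>t. \<gamma> ^ t * p t)"
proof -
  have telescope: "(\<Sum>t\<le>n. \<gamma> ^ t * b t) + \<gamma> ^ n * a n \<le> (\<Sum>t<n. \<gamma> ^ t * p t)" for n
  proof (induction n)
    case 0
    then show ?case using \<open>a 0 = 0\<close> \<open>b 0 = 0\<close> by simp
  next
    case (Suc n)
    have "\<gamma> ^ Suc n * (a (Suc n) + b (Suc n)) \<le> \<gamma> ^ Suc n * (a n + p n)"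
      by (rule mult_left_mono[OF step]) (use gamma in simp)
    also have "\<dots> \<le> \<gamma> ^ n * (a n + p n)"
      by (rule mult_right_mono) (use gamma a p in \<open>auto intro: mult_left_le_one_le\<close>)
    finally show ?case using Suc by (simp add: algebra_simps)
  qed
  have summable_p: "summable (\<lambda>t. \<gamma> ^ t * p t)"
    by (rule summable_discounted) (use gamma p in auto)
  show ?thesis
  proof (rule suminf_le_const)
    show "summable (\<lambda>t. \<gamma> ^ t * b t)"
      by (rule summable_discounted) (use gamma b in auto)
    fix n
    have "(\<Sum>t<n. \<gamma> ^ t * b t) \<le> (\<Sum>t\<le>n. \<gamma> ^ t * b t) + \<gamma> ^ n * a n"
      by (intro add_increasing2 sum_mono2) (use gamma a b in auto)
    also have "\<dots> \<le> (\<Sum>t<n. \<gamma> ^ t * p t)"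
      by (rule telescope)
    also have "\<dots> \<le> (\<Sum>t. \<gamma> ^ t * p t)"
      by (rule sum_le_suminf[OF summable_p]) (use gamma p in auto)
    finally show "(\<Sum>t<n. \<gamma> ^ t * b t) \<le> (\<Sum>t. \<gamma> ^ t * p t)" .
  qed
qed

lemma pmf_shielded:
  "pmf (shielded I mu pol s) a = pmf (pol s) a * (if (s, a) \<notin> I then 1 else 0)
      + measure_pmf.prob (pol s) {a'. (s, a') \<in> I} * pmf (mu s) a"
proof -
  define C where "C = {a. (s, a) \<notin> I}"
  define w where "w = measure_pmf.prob (pol s) {a'. (s, a') \<in> I}"
  have w: "0 \<le> w" by (simp add: w_def)
  have "(\<integral>\<^sup>+a. ennreal (pmf (pol s) a * (if (s, a) \<notin> I then 1 else 0) + w * pmf (mu s) a)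
          \<partial>count_space UNIV)
     = (\<integral>\<^sup>+a. ennreal (pmf (pol s) a) * indicator C a + ennreal w * ennreal (pmf (mu s) a)
          \<partial>count_space UNIV)"
    by (intro nn_integral_cong) (auto simp: C_def w ennreal_plus ennreal_mult indicator_def)
  also have "\<dots> = emeasure (pol s) C + ennreal w"
    by (simp add: nn_integral_add nn_integral_cmult nn_integral_pmf
        flip: nn_integral_count_space_indicator)
  also have "\<dots> = ennreal (measure_pmf.prob (pol s) C + w)"
    by (simp add: measure_pmf.emeasure_eq_measure w)
  also have "measure_pmf.prob (pol s) C + w = 1"
    using measure_pmf.prob_compl[of "{a'. (s, a') \<in> I}" "pol s"]
    by (simp add: C_def w_def Compl_eq_Diff_UNIV[symmetric] Compl_eq)
  finally show ?thesis
    unfolding shielded_def w_def[symmetric] by (intro pmf_embed_pmf) (use w in auto)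
qed

lemma pmf_le_shielded: "(s, a) \<notin> I \<Longrightarrow> pmf (pol s) a \<le> pmf (shielded I mu pol s) a"
  by (simp add: pmf_shielded)

lemma absorb_kernel_None: "absorb_kernel I P None = (\<lambda>a. return_pmf None)"
  by (simp add: absorb_kernel_def fun_eq_iff)

lemma pmf_absorb_step_le:
  assumes "\<And>a. (s, a) \<notin> I \<Longrightarrow> pmf (pol s) a \<le> pmf (pol' s) a"
  shows "pmf (bind_pmf (pol s) (absorb_kernel I P (Some s))) (Some s')
      \<le> pmf (bind_pmf (pol' s) (P s)) s'"
proof -
  have "ennreal (pmf (pol s) a) * ennreal (pmf (absorb_kernel I P (Some s) a) (Some s'))
      \<le> ennreal (pmf (pol' s) a) * ennreal (pmf (P s a) s')" for a
    using assms[of a]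
    by (cases "(s, a) \<in> I") (auto simp: absorb_kernel_def pmf_map_inj' intro!: mult_right_mono)
  then have "ennreal (pmf (bind_pmf (pol s) (absorb_kernel I P (Some s))) (Some s'))
      \<le> ennreal (pmf (bind_pmf (pol' s) (P s)) s')"
    by (simp add: ennreal_pmf_bind nn_integral_measure_pmf nn_integral_mono)
  then show ?thesis by simp
qed

lemma pmf_absorb_state_dist_le:
  assumes "\<And>s a. (s, a) \<notin> I \<Longrightarrow> pmf (pol s) a \<le> pmf (pol' s) a"
  shows "pmf (state_dist (absorb_kernel I P) (ext_policy pol pi_dag) (map_pmf Some d0) t) (Some s)
     \<le> pmf (state_dist P pol' d0 t) s"
proof (induction t arbitrary: s)
  case 0
  then show ?case by (simp add: pmf_map_inj')
next
  case (Suc t)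
  define D where "D = state_dist (absorb_kernel I P) (ext_policy pol pi_dag) (map_pmf Some d0) t"
  define next_pmf where "next_pmf = (\<lambda>z. case z of None \<Rightarrow> 0
                                   | Some u \<Rightarrow> ennreal (pmf (bind_pmf (pol' u) (P u)) s))"
  have "ennreal (pmf D z) * ennreal (pmf (bind_pmf (ext_policy pol pi_dag z) (absorb_kernel I P z)) (Some s))
      \<le> ennreal (pmf (map_pmf Some (state_dist P pol' d0 t)) z) * next_pmf z" for z
  proof (cases z)
    case (Some u)
    show ?thesis
      using Suc.IH[of u] pmf_absorb_step_le[of u I pol pol' P s] assms
      by (auto simp: Some D_def next_pmf_def pmf_map_inj' intro!: mult_mono,
          simp add: ext_policy_def)
  qed (simp add: absorb_kernel_None)
  then have "ennreal (pmf (bind_pmf D (\<lambda>z. bind_pmf (ext_policy pol pi_dag z) (absorb_kernel I P z))) (Some s))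
      \<le> (\<integral>\<^sup>+z. next_pmf z \<partial>map_pmf Some (state_dist P pol' d0 t))"
    by (simp add: ennreal_pmf_bind nn_integral_measure_pmf nn_integral_mono)
  also have "\<dots> = ennreal (pmf (state_dist P pol' d0 (Suc t)) s)"
    by (simp add: next_pmf_def ennreal_pmf_bind)
  finally show ?case by (simp add: D_def)
qed

text \<open>The coupled chain lives on pairs (state, flag); \<open>alive_state\<close> maps it onto the absorbing
MDP, sending every state with dropped flag to \<open>s\<^sub>\<dagger> = None\<close>.\<close>

definition flag_kernel :: "('s \<times> 'a) set \<Rightarrow> ('s \<Rightarrow> 'a \<Rightarrow> 's pmf) \<Rightarrow> 's \<times> bool \<Rightarrow> 'a \<Rightarrow> ('s \<times> bool) pmf"
  where "flag_kernel I P x a = map_pmf (\<lambda>s'. (s', snd x \<and> (fst x, a) \<notin> I)) (P (fst x) a)"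

definition flag_dist :: "('s \<times> 'a) set \<Rightarrow> ('s \<Rightarrow> 'a \<Rightarrow> 's pmf) \<Rightarrow> ('s \<Rightarrow> 'a pmf) \<Rightarrow> 's pmf
    \<Rightarrow> nat \<Rightarrow> ('s \<times> bool) pmf"
  where "flag_dist I P pol d0 =
    state_dist (flag_kernel I P) (\<lambda>x. pol (fst x)) (map_pmf (\<lambda>s. (s, True)) d0)"

definition flag_sa_dist :: "('s \<times> 'a) set \<Rightarrow> ('s \<Rightarrow> 'a \<Rightarrow> 's pmf) \<Rightarrow> ('s \<Rightarrow> 'a pmf) \<Rightarrow> 's pmf
    \<Rightarrow> nat \<Rightarrow> (('s \<times> bool) \<times> 'a) pmf"
  where "flag_sa_dist I P pol d0 =
    sa_dist (flag_kernel I P) (\<lambda>x. pol (fst x)) (map_pmf (\<lambda>s. (s, True)) d0)"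

definition alive_state :: "'s \<times> bool \<Rightarrow> 's option"
  where "alive_state x = (if snd x then Some (fst x) else None)"

lemma map_fst_flag_dist: "map_pmf fst (flag_dist I P pol d0 t) = state_dist P pol d0 t"
proof (induction t)
  case 0
  then show ?case by (simp add: flag_dist_def pmf.map_comp o_def)
next
  case (Suc t)
  then show ?case
    by (simp add: flag_dist_def flag_kernel_def map_bind_pmf pmf.map_comp o_def bind_map_pmf flip: Suc)
qed

lemma map_alive_state_flag_dist:
  "map_pmf alive_state (flag_dist I P pol d0 t)
     = state_dist (absorb_kernel I P) (ext_policy pol pi_dag) (map_pmf Some d0) t"
proof (induction t)
  case 0
  then show ?case by (simp add: flag_dist_def pmf.map_comp o_def alive_state_def)
next
  case (Suc t)
  have step: "map_pmf alive_state (bind_pmf (pol (fst x)) (flag_kernel I P x))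
      = bind_pmf (ext_policy pol pi_dag (alive_state x)) (absorb_kernel I P (alive_state x))" for x
    by (cases x)
       (auto simp: alive_state_def flag_kernel_def ext_policy_def absorb_kernel_def map_bind_pmf
         absorb_kernel_None pmf.map_comp o_def bind_return_pmf bind_pmf_const intro!: bind_pmf_cong)
  have "map_pmf alive_state (flag_dist I P pol d0 (Suc t)) = bind_pmf (flag_dist I P pol d0 t)
      (\<lambda>x. map_pmf alive_state (bind_pmf (pol (fst x)) (flag_kernel I P x)))"
    by (simp add: flag_dist_def map_bind_pmf)
  also have "\<dots> = bind_pmf (map_pmf alive_state (flag_dist I P pol d0 t))
      (\<lambda>z. bind_pmf (ext_policy pol pi_dag z) (absorb_kernel I P z))"
    by (simp add: step bind_map_pmf)
  finally show ?case by (simp add: Suc)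
qed

lemma prob_flag_sa_dist_intervened:
  "measure_pmf.prob (flag_sa_dist I P pol d0 t) {(x, a). snd x \<and> (fst x, a) \<in> I}
     = measure_pmf.prob (sa_dist (absorb_kernel I P) (ext_policy pol pi_dag) (map_pmf Some d0) t)
         {(Some s, a) | s a. (s, a) \<in> I}"
proof -
  define X where "X = flag_dist I P pol d0 t"
  have "sa_dist (absorb_kernel I P) (ext_policy pol pi_dag) (map_pmf Some d0) t
      = bind_pmf X (\<lambda>x. map_pmf (Pair (alive_state x)) (ext_policy pol pi_dag (alive_state x)))"
    by (simp add: sa_dist_def X_def bind_map_pmf flip: map_alive_state_flag_dist)
  moreover have "flag_sa_dist I P pol d0 t = bind_pmf X (\<lambda>x. map_pmf (Pair x) (pol (fst x)))"
    by (simp add: flag_sa_dist_def flag_dist_def X_def sa_dist_def)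
  moreover have "emeasure (map_pmf (Pair x) (pol (fst x))) {(x, a). snd x \<and> (fst x, a) \<in> I}
      = emeasure (map_pmf (Pair (alive_state x)) (ext_policy pol pi_dag (alive_state x)))
          {(Some s, a) | s a. (s, a) \<in> I}" for x
    by (cases x) (auto simp: alive_state_def ext_policy_def vimage_def)
  ultimately show ?thesis
    by (simp add: measure_def emeasure_bind_pmf del: emeasure_map_pmf)
qed

lemma pmf_state_dist_le_shielded_plus_dropped:
  assumes "\<And>s a. (s, a) \<notin> I \<Longrightarrow> pmf (pol s) a \<le> pmf (pol' s) a"
  shows "pmf (state_dist P pol d0 t) s
     \<le> pmf (state_dist P pol' d0 t) s + measure_pmf.prob (flag_dist I P pol d0 t) {x. \<not> snd x \<and> fst x = s}"
proof -
  define X where "X = flag_dist I P pol d0 t"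
  have "pmf (state_dist P pol d0 t) s = measure_pmf.prob X (fst -` {s})"
    by (simp add: X_def pmf_map flip: map_fst_flag_dist[of I P pol d0 t])
  also have "fst -` {s} = {x. snd x \<and> fst x = s} \<union> {x. \<not> snd x \<and> fst x = s}"
    by auto
  also have "measure_pmf.prob X \<dots> = measure_pmf.prob X (alive_state -` {Some s})
      + measure_pmf.prob X {x. \<not> snd x \<and> fst x = s}"
    by (subst measure_pmf.finite_measure_Union)
       (auto simp: alive_state_def vimage_def intro!: arg_cong[where f = "measure_pmf.prob X"])
  also have "measure_pmf.prob X (alive_state -` {Some s})
      = pmf (state_dist (absorb_kernel I P) (ext_policy pol undefined) (map_pmf Some d0) t) (Some s)"
    by (simp add: X_def pmf_map flip: map_alive_state_flag_dist)
  also have "\<dots> \<le> pmf (state_dist P pol' d0 t) s"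
    by (rule pmf_absorb_state_dist_le[OF assms])
  finally show ?thesis by (simp add: X_def)
qed

lemma emeasure_flag_dist_dropped_Suc_le:
  assumes tri: "\<And>a. P s_tri a = return_pmf s_circ"
    and circ: "\<And>a. P s_circ a = return_pmf s_circ"
    and safe: "\<And>s a. (s, a) \<in> I \<Longrightarrow> s \<noteq> s_tri \<and> s \<noteq> s_circ"
  shows "emeasure (flag_dist I P pol d0 (Suc t)) {x. \<not> snd x \<and> fst x \<noteq> s_circ}
    \<le> emeasure (flag_dist I P pol d0 t) {x. \<not> snd x \<and> fst x \<noteq> s_tri \<and> fst x \<noteq> s_circ}
      + emeasure (flag_sa_dist I P pol d0 t) {(x, a). snd x \<and> (fst x, a) \<in> I}"
proof -
  define XA where "XA = flag_sa_dist I P pol d0 t"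
  define dropped_safe where "dropped_safe = {x. \<not> snd x \<and> fst x \<noteq> s_tri \<and> fst x \<noteq> s_circ}"
  define intervened where "intervened = {(x, a). snd x \<and> (fst x, a) \<in> I}"
  have "emeasure (flag_kernel I P x a) {x. \<not> snd x \<and> fst x \<noteq> s_circ}
      \<le> indicator (fst -` dropped_safe) (x, a) + indicator intervened (x, a)" for x a
  proof -
    obtain s f where x: "x = (s, f)" by fastforce
    have kernel: "emeasure (flag_kernel I P x a) {x. \<not> snd x \<and> fst x \<noteq> s_circ}
       = emeasure (P s a) {s'. \<not> (f \<and> (s, a) \<notin> I) \<and> s' \<noteq> s_circ}"
      by (simp add: x flag_kernel_def vimage_def)
    consider "f \<and> (s, a) \<notin> I" | "s = s_tri \<or> s = s_circ"
      | "(x, a) \<in> intervened \<or> x \<in> dropped_safe"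
      by (auto simp: x intervened_def dropped_safe_def)
    then show ?thesis
    proof cases
      case 1
      then show ?thesis by (simp add: kernel)
    next
      case 2
      then have "P s a = return_pmf s_circ" using tri circ by auto
      then show ?thesis by (simp add: kernel)
    next
      case 3
      have "emeasure (flag_kernel I P x a) {x. \<not> snd x \<and> fst x \<noteq> s_circ} \<le> 1"
        by (rule measure_pmf.emeasure_le_1)
      also have "(1::ennreal) \<le> indicator (fst -` dropped_safe) (x, a) + indicator intervened (x, a)"
        using 3 by (auto intro: add_increasing add_increasing2)
      finally show ?thesis .
    qed
  qed
  then have "emeasure (flag_dist I P pol d0 (Suc t)) {x. \<not> snd x \<and> fst x \<noteq> s_circ}
      \<le> (\<integral>\<^sup>+y. indicator (fst -` dropped_safe) y + indicator intervened y \<partial>XA)"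
    unfolding XA_def flag_dist_def flag_sa_dist_def state_dist_Suc_sa_dist emeasure_bind_pmf
    by (intro nn_integral_mono) (auto simp: case_prod_beta)
  also have "\<dots> = emeasure (map_pmf fst XA) dropped_safe + emeasure XA intervened"
    by (simp add: nn_integral_add)
  finally show ?thesis
    by (simp add: XA_def dropped_safe_def intervened_def flag_dist_def flag_sa_dist_def map_fst_sa_dist)
qed

lemma suminf_flag_dist_dropped_le:
  assumes gamma: "0 \<le> \<gamma>" "\<gamma> < 1" and distinct: "s_tri \<noteq> s_circ"
    and tri: "\<And>a. P s_tri a = return_pmf s_circ"
    and circ: "\<And>a. P s_circ a = return_pmf s_circ"
    and safe: "\<And>s a. (s, a) \<in> I \<Longrightarrow> s \<noteq> s_tri \<and> s \<noteq> s_circ"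
  shows "(\<Sum>t. \<gamma> ^ t * measure_pmf.prob (flag_dist I P pol d0 t) {x. \<not> snd x \<and> fst x = s_tri})
     \<le> (\<Sum>t. \<gamma> ^ t * measure_pmf.prob (flag_sa_dist I P pol d0 t) {(x, a). snd x \<and> (fst x, a) \<in> I})"
proof -
  define X where "X = flag_dist I P pol d0"
  define dropped_safe where "dropped_safe t = measure_pmf.prob (X t)
    {x. \<not> snd x \<and> fst x \<noteq> s_tri \<and> fst x \<noteq> s_circ}" for t
  define dropped_tri where "dropped_tri t = measure_pmf.prob (X t) {x. \<not> snd x \<and> fst x = s_tri}" for t
  define intervened where "intervened t = measure_pmf.prob (flag_sa_dist I P pol d0 t)
    {(x, a). snd x \<and> (fst x, a) \<in> I}" for t
  have step: "dropped_safe (Suc t) + dropped_tri (Suc t) \<le> dropped_safe t + intervened t" for t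
  proof -
    have split: "{x. \<not> snd x \<and> fst x \<noteq> s_circ}
        = {x. \<not> snd x \<and> fst x \<noteq> s_tri \<and> fst x \<noteq> s_circ} \<union> {x. \<not> snd x \<and> fst x = s_tri}"
      using distinct by auto
    have "dropped_safe (Suc t) + dropped_tri (Suc t)
        = measure_pmf.prob (X (Suc t)) {x. \<not> snd x \<and> fst x \<noteq> s_circ}"
      unfolding split dropped_safe_def dropped_tri_def
      by (subst measure_pmf.finite_measure_Union) auto
    also have "\<dots> \<le> dropped_safe t + intervened t"
      using emeasure_flag_dist_dropped_Suc_le[OF tri circ safe, where pol = pol and ?d0.0 = d0 and t = t]
      by (simp add: X_def dropped_safe_def intervened_def measure_pmf.emeasure_eq_measure
          flip: ennreal_plus)
    finally show ?thesis .
  qed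
  have start: "dropped_safe 0 = 0" "dropped_tri 0 = 0"
    by (simp_all add: dropped_safe_def dropped_tri_def X_def flag_dist_def vimage_def)
  show ?thesis
    using suminf_discounted_le_of_step[OF gamma step start]
    by (simp add: X_def dropped_safe_def dropped_tri_def intervened_def)
qed

lemma infsum_absorb_occ_intervened:
  assumes "0 \<le> \<gamma>" "\<gamma> < 1"
  shows "1 / (1 - \<gamma>) * infsum (absorb_occ \<gamma> I P pol pi_dag d0) {(Some s, a) | s a. (s, a) \<in> I}
     = (\<Sum>t. \<gamma> ^ t * measure_pmf.prob (flag_sa_dist I P pol d0 t) {(x, a). snd x \<and> (fst x, a) \<in> I})"
  using assms
  by (simp add: absorb_occ_def[abs_def] infsum_cmult_right' infsum_discounted_pmf
      prob_flag_sa_dist_intervened[where pi_dag = pi_dag])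

theorem mainTheorem18:
  fixes P :: "'s \<Rightarrow> 'a \<Rightarrow> 's pmf" and d0 :: "'s pmf" and \<gamma> :: real
    and s_tri s_circ :: 's
    and Q :: "'s \<Rightarrow> 'a \<Rightarrow> real" and mu :: "'s \<Rightarrow> 'a pmf" and \<eta> :: real
    and pol :: "'s \<Rightarrow> 'a pmf" and pi_dag :: "'a pmf"
  assumes gamma: "0 \<le> \<gamma>" "\<gamma> < 1"
    and distinct: "s_tri \<noteq> s_circ"
    and tri: "\<And>a. P s_tri a = return_pmf s_circ"
    and circ: "\<And>a. P s_circ a = return_pmf s_circ"
    and d0_circ: "pmf d0 s_circ = 0"
    and Q_range: "\<And>s a. s \<noteq> s_tri \<Longrightarrow> s \<noteq> s_circ \<Longrightarrow> 0 \<le> Q s a \<and> Q s a \<le> 1"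
    and eta: "0 \<le> \<eta>" "\<eta> \<le> 1"
    and partial: "partial_set (interv_set s_tri s_circ Q mu \<eta>)"
  shows "cost_value \<gamma> s_tri P pol d0
     \<le> cost_value \<gamma> s_tri P (shielded (interv_set s_tri s_circ Q mu \<eta>) mu pol) d0
       + 1 / (1 - \<gamma>) *
         infsum (absorb_occ \<gamma> (interv_set s_tri s_circ Q mu \<eta>) P pol pi_dag d0)
                {(Some s, a) | s a. (s, a) \<in> interv_set s_tri s_circ Q mu \<eta>}"
proof -
  define I where "I = interv_set s_tri s_circ Q mu \<eta>"
  define pol' where "pol' = shielded I mu pol"
  define dropped where "dropped t = measure_pmf.prob (flag_dist I P pol d0 t)
    {x. \<not> snd x \<and> fst x = s_tri}" for t
  have safe: "\<And>s a. (s, a) \<in> I \<Longrightarrow> s \<noteq> s_tri \<and> s \<noteq> s_circ"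
    by (simp add: I_def interv_set_def)
  have dom: "\<And>s a. (s, a) \<notin> I \<Longrightarrow> pmf (pol s) a \<le> pmf (pol' s) a"
    by (simp add: pol'_def pmf_le_shielded)
  have summable: "summable (\<lambda>t. \<gamma> ^ t * f t)" if "\<And>t. 0 \<le> f t" "\<And>t. f t \<le> 1" for f
    by (rule summable_discounted) (use gamma that in auto)
  have "cost_value \<gamma> s_tri P pol d0 = (\<Sum>t. \<gamma> ^ t * pmf (state_dist P pol d0 t) s_tri)"
    by (rule cost_value_eq_suminf_pmf)
  also have "\<dots> \<le> (\<Sum>t. \<gamma> ^ t * pmf (state_dist P pol' d0 t) s_tri + \<gamma> ^ t * dropped t)"
    using pmf_state_dist_le_shielded_plus_dropped[OF dom] gamma
    by (intro suminf_le summable_add summable)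
       (auto simp: dropped_def pmf_le_1 simp flip: distrib_left intro!: mult_left_mono)
  also have "\<dots> = cost_value \<gamma> s_tri P pol' d0 + (\<Sum>t. \<gamma> ^ t * dropped t)"
    by (subst suminf_add[symmetric]) (auto simp: cost_value_eq_suminf_pmf dropped_def pmf_le_1 intro!: summable)
  also have "(\<Sum>t. \<gamma> ^ t * dropped t)
      \<le> 1 / (1 - \<gamma>) * infsum (absorb_occ \<gamma> I P pol pi_dag d0) {(Some s, a) | s a. (s, a) \<in> I}"
    unfolding infsum_absorb_occ_intervened[OF gamma] dropped_def
    by (rule suminf_flag_dist_dropped_le[OF gamma distinct tri circ safe])
  finally show ?thesis by (simp add: I_def pol'_def)
qed

end
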